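(* Let $G$ be a 2-connected graph and $G'$ a graph that is not a circuit, and let $f:G\rightarrow G'$ be a circuit surjection. Let $e$ be an edge of $G'$. If $C$ is a circuit of $G$ containing at least one element of $f^{-1}(e)$, then $C$ contains every element of $f^{-1}(e)$.
   Context: Graphs are undirected, without loops or multiple edges, and not necessarily finite. A circuit surjection $f:G\rightarrow G'$ is a map from the edge set $E(G)$ onto the edge set $E(G')$ such that for every circuit (cycle) $C$ of $G$, the edge set $f(C)$ is a circuit of $G'$; it is also required that $G'$ has no isolated vertices. "$G'$ is not a circuit" means $G'$ is not itself a single cycle. *)

theory Defs
  imports Main
begin

definition graph :: "'a set \<Rightarrow> 'a set set \<Rightarrow> bool" where
  "graph V E \<longleftrightarrow> (\<forall>e\<in>E. \<exists>u v. u \<noteq> v \<and> e = {u, v} \<and> u \<in> V \<and> v \<in> V)"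

definition cycle_edges :: "'a list \<Rightarrow> 'a set set" where
  "cycle_edges xs = {{xs ! i, xs ! ((i + 1) mod length xs)} | i. i < length xs}"

definition is_circuit :: "'a set \<Rightarrow> 'a set set \<Rightarrow> 'a set set \<Rightarrow> bool" where
  "is_circuit V E C \<longleftrightarrow> (\<exists>xs. distinct xs \<and> length xs \<ge> 3 \<and> set xs \<subseteq> V
       \<and> cycle_edges xs \<subseteq> E \<and> C = cycle_edges xs)"

definition connected_graph :: "'a set \<Rightarrow> 'a set set \<Rightarrow> bool" where
  "connected_graph V E \<longleftrightarrow> V \<noteq> {} \<and>
     (\<forall>u\<in>V. \<forall>w\<in>V. (\<lambda>x y. x \<in> V \<and> y \<in> V \<and> {x, y} \<in> E)\<^sup>*\<^sup>* u w)"

definition two_connected :: "'a set \<Rightarrow> 'a set set \<Rightarrow> bool" where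
  "two_connected V E \<longleftrightarrow> (infinite V \<or> card V > 2) \<and> connected_graph V E \<and>
     (\<forall>v\<in>V. connected_graph (V - {v}) {e\<in>E. v \<notin> e})"

definition no_isolated_vertices :: "'a set \<Rightarrow> 'a set set \<Rightarrow> bool" where
  "no_isolated_vertices V E \<longleftrightarrow> (\<forall>v\<in>V. \<exists>e\<in>E. v \<in> e)"

definition circuit_surjection ::
  "'a set \<Rightarrow> 'a set set \<Rightarrow> 'b set \<Rightarrow> 'b set set \<Rightarrow> ('a set \<Rightarrow> 'b set) \<Rightarrow> bool" where
  "circuit_surjection V E V' E' f \<longleftrightarrow> f ` E = E' \<and> no_isolated_vertices V' E' \<and>
     (\<forall>C. is_circuit V E C \<longrightarrow> is_circuit V' E' (f ` C))"

end

theory Submission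
  imports Defs
begin

text \<open>
  Suppose some y with f y = e lies outside C. By 2-connectivity y lies on an ear Q of C, a path
  between two vertices c, d of C that meets C only at c and d. With the two c-d arcs of C this
  gives a theta graph whose three circuits are mapped onto circuits of G'; as e is the image of
  an edge of Q and of an edge of C, the three image circuits share an edge and, each being
  covered by the other two, coincide with K = f ` C. Since G' is not a circuit, some edge z
  has f z \<notin> K, and z lies on an ear R of the theta. Wherever R is attached, R together with
  pieces of the theta forms a new theta in which two branches still cover K while the image
  of R escapes K; then those two branches have disjoint images. Applying this to enough such
  thetas shows that the image of some nonempty path of the theta is empty, which is absurd.
\<close>

section \<open>Paths as vertex lists\<close>

fun path_edges :: "'a list \<Rightarrow> 'a set set" where
  "path_edges (a # b # xs) = insert {a, b} (path_edges (b # xs))"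
| "path_edges _ = {}"

definition path :: "'a set set \<Rightarrow> 'a list \<Rightarrow> bool" where
  "path E p \<longleftrightarrow> p \<noteq> [] \<and> distinct p \<and> path_edges p \<subseteq> E"

lemma path_edges_Cons: "xs \<noteq> [] \<Longrightarrow> path_edges (x # xs) = insert {x, hd xs} (path_edges xs)"
  by (cases xs) auto

lemma path_edges_append:
  "xs \<noteq> [] \<Longrightarrow> ys \<noteq> [] \<Longrightarrow> path_edges (xs @ ys) = path_edges xs \<union> path_edges ys \<union> {{last xs, hd ys}}"
  by (induction xs rule: path_edges.induct) (auto simp: path_edges_Cons)

lemma path_edges_join:
  "p \<noteq> [] \<Longrightarrow> last p = hd r \<Longrightarrow> path_edges (p @ tl r) = path_edges p \<union> path_edges r"
  by (cases r rule: path_edges.cases) (auto simp: path_edges_append)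

lemma path_edges_rev [simp]: "path_edges (rev xs) = path_edges xs"
proof (induction xs)
  case (Cons x xs)
  then show ?case
    by (cases "xs = []") (auto simp: path_edges_append path_edges_Cons last_rev insert_commute)
qed simp

lemma path_edges_subset_iff: "path_edges p \<subseteq> E \<longleftrightarrow> successively (\<lambda>x y. {x, y} \<in> E) p"
  by (induction p rule: path_edges.induct) auto

lemma path_edges_empty_iff: "path_edges p = {} \<longleftrightarrow> length p < 2"
  by (cases p rule: path_edges.cases) auto

lemma path_edges_append_subset: "path_edges xs \<union> path_edges ys \<subseteq> path_edges (xs @ ys)"
  by (cases "xs = [] \<or> ys = []") (auto simp: path_edges_append)

lemma path_edges_take: "path_edges (take k xs) \<subseteq> path_edges xs"
  using path_edges_append_subset[of "take k xs" "drop k xs"] by simp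

lemma path_edges_drop: "path_edges (drop k xs) \<subseteq> path_edges xs"
  using path_edges_append_subset[of "take k xs" "drop k xs"] by simp

lemma vertex_in_path_edge: "v \<in> set p \<Longrightarrow> length p \<ge> 2 \<Longrightarrow> \<exists>e\<in>path_edges p. v \<in> e"
proof (induction p rule: path_edges.induct)
  case (1 a b xs)
  then show ?case by (cases "v = a"; cases xs) auto
qed auto

lemma path_edges_conv_nth: "path_edges xs = {{xs ! i, xs ! Suc i} | i. Suc i < length xs}"
proof (induction xs rule: path_edges.induct)
  case (1 a b xs)
  have "{{(a # b # xs) ! i, (a # b # xs) ! Suc i} | i. Suc i < length (a # b # xs)}
     = insert {a, b} {{(b # xs) ! i, (b # xs) ! Suc i} | i. Suc i < length (b # xs)}"
    (is "?L = ?R")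
  proof
    show "?L \<subseteq> ?R"
    proof
      fix e assume "e \<in> ?L"
      then obtain i where "e = {(a # b # xs) ! i, (a # b # xs) ! Suc i}" "Suc i < length (a # b # xs)"
        by blast
      then show "e \<in> ?R" by (cases i) auto
    qed
    show "?R \<subseteq> ?L"
    proof
      fix e assume "e \<in> ?R"
      then consider "e = {a, b}" | i where "e = {(b # xs) ! i, (b # xs) ! Suc i}" "Suc i < length (b # xs)"
        by blast
      then show "e \<in> ?L"
      proof cases
        case 1
        then show ?thesis by (auto intro!: exI[of _ 0])
      next
        case (2 i)
        then show ?thesis by (auto intro!: exI[of _ "Suc i"])
      qed
    qed
  qed
  then show ?case using 1 by simp
qed auto

lemma path_nonempty: "path E p \<Longrightarrow> p \<noteq> []"
  unfolding path_def by blast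

lemma path_rev_iff [simp]: "path E (rev p) \<longleftrightarrow> path E p"
  unfolding path_def by auto

lemma path_rev: "path E p \<Longrightarrow> path E (rev p)"
  by simp

lemma path_take: "path E p \<Longrightarrow> 0 < k \<Longrightarrow> path E (take k p)"
  unfolding path_def using path_edges_take by fastforce

lemma path_drop: "path E p \<Longrightarrow> k < length p \<Longrightarrow> path E (drop k p)"
  unfolding path_def using path_edges_drop by fastforce

lemma length2_eq: "length p = 2 \<Longrightarrow> length q = 2 \<Longrightarrow> hd p = hd q \<Longrightarrow> last p = last q \<Longrightarrow> p = q"
  by (cases p rule: path_edges.cases; cases q rule: path_edges.cases) auto

lemma path_length_ge2: "p \<noteq> [] \<Longrightarrow> hd p \<noteq> last p \<Longrightarrow> length p \<ge> 2"
  by (cases p rule: path_edges.cases) auto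

lemma path_join:
  assumes p: "path E p" and r: "path E r" and pr: "last p = hd r" "set p \<inter> set r \<subseteq> {hd r}"
  shows "path E (p @ tl r)" "hd (p @ tl r) = hd p" "last (p @ tl r) = last r"
    "set (p @ tl r) = set p \<union> set r" "path_edges (p @ tl r) = path_edges p \<union> path_edges r"
    "length (p @ tl r) = length p + length r - 1"
proof -
  obtain h t where ht: "r = h # t" using path_nonempty[OF r] by (cases r) auto
  have pne: "p \<noteq> []" using path_nonempty[OF p] .
  have "distinct (p @ t)" using p r pr unfolding ht path_def by auto
  moreover have "path_edges (p @ t) \<subseteq> E"
    using p r pr path_edges_join[OF pne pr(1)] unfolding ht path_def by simp
  ultimately show "path E (p @ tl r)" using p unfolding ht path_def by simp
  show "hd (p @ tl r) = hd p" "last (p @ tl r) = last r" "set (p @ tl r) = set p \<union> set r"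
    "length (p @ tl r) = length p + length r - 1"
    using pne pr(1) unfolding ht by auto
  show "path_edges (p @ tl r) = path_edges p \<union> path_edges r" using path_edges_join[OF pne pr(1)] .
qed

lemma graph_edge:
  assumes "graph V E" "{a, b} \<in> E"
  shows "a \<in> V" "b \<in> V" "a \<noteq> b"
proof -
  obtain u v where uv: "u \<noteq> v" "{a, b} = {u, v}" "u \<in> V" "v \<in> V"
    using assms unfolding graph_def by meson
  then have "(a = u \<and> b = v) \<or> (a = v \<and> b = u)" by (simp add: doubleton_eq_iff)
  then show "a \<in> V" "b \<in> V" "a \<noteq> b" using uv by auto
qed

lemma graph_edge_subset:
  assumes "graph V E" "e \<in> E"
  shows "e \<subseteq> V"
proof -
  obtain u v where "e = {u, v}" "u \<in> V" "v \<in> V" using assms unfolding graph_def by meson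
  then show ?thesis by simp
qed

lemma path_vertices:
  assumes "graph V E" "path E p" "length p \<ge> 2"
  shows "set p \<subseteq> V"
proof
  fix v assume "v \<in> set p"
  then obtain e where e: "e \<in> path_edges p" "v \<in> e" using vertex_in_path_edge[OF _ assms(3)] by blast
  then have "e \<in> E" using assms(2) unfolding path_def by blast
  then show "v \<in> V" using graph_edge_subset[OF assms(1)] e(2) by blast
qed

lemma last_take_Suc: "k < length xs \<Longrightarrow> last (take (Suc k) xs) = xs ! k"
  by (simp add: take_Suc_conv_app_nth)

lemma path_split:
  assumes "path E r" "k < length r"
  shows "path E (take (Suc k) r)" "path E (drop k r)" "hd (take (Suc k) r) = hd r"
    "last (take (Suc k) r) = r ! k" "hd (drop k r) = r ! k" "last (drop k r) = last r"
    "set (take (Suc k) r) \<inter> set (drop k r) = {r ! k}"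
    "set (take (Suc k) r) \<union> set (drop k r) = set r"
    "path_edges (take (Suc k) r) \<union> path_edges (drop k r) = path_edges r"
    "length (take (Suc k) r) + length (drop k r) = length r + 1"
proof -
  have ne: "r \<noteq> []" using assms by auto
  have d: "distinct r" using assms(1) unfolding path_def by blast
  have take: "set (take (Suc k) r) = set (take k r) \<union> {r ! k}"
    using assms(2) by (simp add: take_Suc_conv_app_nth)
  have kin: "r ! k \<in> set (drop k r)" using assms(2) by (metis Cons_nth_drop_Suc list.set_intros(1))
  show "path E (take (Suc k) r)" using path_take[OF assms(1)] by simp
  show "path E (drop k r)" using path_drop[OF assms] .
  show "hd (take (Suc k) r) = hd r" using ne by simp
  show lt: "last (take (Suc k) r) = r ! k" using last_take_Suc[OF assms(2)] .
  show hd: "hd (drop k r) = r ! k" using assms(2) by (simp add: hd_drop_conv_nth)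
  show "last (drop k r) = last r" using assms(2) by simp
  show "set (take (Suc k) r) \<union> set (drop k r) = set r"
    using take kin set_append[of "take k r" "drop k r"] by auto
  show "set (take (Suc k) r) \<inter> set (drop k r) = {r ! k}"
    using take kin set_take_disj_set_drop_if_distinct[OF d, of k k] by auto
  have "take (Suc k) r @ tl (drop k r) = r"
    by (simp only: tl_drop drop_Suc[symmetric] append_take_drop_id)
  moreover have "path_edges (take (Suc k) r @ tl (drop k r))
      = path_edges (take (Suc k) r) \<union> path_edges (drop k r)"
    using path_edges_join[of "take (Suc k) r" "drop k r"] lt hd ne by simp
  ultimately show "path_edges (take (Suc k) r) \<union> path_edges (drop k r) = path_edges r"
    by simp
  show "length (take (Suc k) r) + length (drop k r) = length r + 1" using assms(2) by simp
qed

definition splits_at :: "'a set set \<Rightarrow> 'a list \<Rightarrow> 'a \<Rightarrow> 'a list \<Rightarrow> 'a list \<Rightarrow> bool" where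
  "splits_at E r v s t \<longleftrightarrow> path E s \<and> path E t \<and> hd s = hd r \<and> last s = v \<and> hd t = v \<and> last t = last r
     \<and> set s \<inter> set t = {v} \<and> set s \<union> set t = set r \<and> path_edges s \<union> path_edges t = path_edges r
     \<and> length s + length t = length r + 1"

lemma splits_at_exists:
  assumes "path E r" "v \<in> set r"
  obtains s t where "splits_at E r v s t"
proof -
  obtain k where "k < length r" "r ! k = v" using assms(2) by (meson in_set_conv_nth)
  then show ?thesis using that path_split[OF assms(1)] unfolding splits_at_def by metis
qed

lemma splits_at_rev: "splits_at E r v s t \<Longrightarrow> splits_at E (rev r) v (rev t) (rev s)"
  unfolding splits_at_def using path_nonempty
  by (auto simp: hd_rev last_rev)

lemma splits_at_twice:
  assumes s1: "splits_at E r c m1 t" and s2: "splits_at E t d sg m2" and cd: "c \<noteq> d"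
  shows "path E m1" "path E sg" "path E m2"
    "hd m1 = hd r" "last m1 = c" "hd sg = c" "last sg = d" "hd m2 = d" "last m2 = last r"
    "set m1 \<inter> set m2 = {}" "set sg \<inter> set m1 \<subseteq> {c}" "set sg \<inter> set m2 \<subseteq> {d}"
    "set r = set m1 \<union> set sg \<union> set m2"
    "path_edges r = path_edges m1 \<union> path_edges sg \<union> path_edges m2"
    "length m1 + length sg + length m2 = length r + 2"
proof -
  have m1: "path E m1" "hd m1 = hd r" "last m1 = c" and t: "hd t = c" "last t = last r"
    and s1': "set m1 \<inter> set t = {c}" "set m1 \<union> set t = set r"
      "path_edges m1 \<union> path_edges t = path_edges r" "length m1 + length t = length r + 1"
    using s1 unfolding splits_at_def by auto
  have sg: "path E sg" "hd sg = c" "last sg = d" and m2: "path E m2" "hd m2 = d" "last m2 = last r"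
    and s2': "set sg \<inter> set m2 = {d}" "set sg \<union> set m2 = set t"
      "path_edges sg \<union> path_edges m2 = path_edges t" "length sg + length m2 = length t + 1"
    using s2 t unfolding splits_at_def by auto
  show "path E m1" "path E sg" "path E m2"
    "hd m1 = hd r" "last m1 = c" "hd sg = c" "last sg = d" "hd m2 = d" "last m2 = last r"
    using m1 sg m2 by simp_all
  have "c \<in> set sg" using hd_in_set[OF path_nonempty[OF sg(1)]] sg(2) by simp
  then have "c \<notin> set m2" using s2'(1) cd by auto
  moreover have "set m2 \<subseteq> set t" "set sg \<subseteq> set t" using s2'(2) by auto
  ultimately show "set m1 \<inter> set m2 = {}" using s1'(1) by (blast dest: equalityD1)
  show "set sg \<inter> set m1 \<subseteq> {c}" "set sg \<inter> set m2 \<subseteq> {d}"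
    using s1'(1) s2'(1) \<open>set sg \<subseteq> set t\<close> by auto
  show "set r = set m1 \<union> set sg \<union> set m2" "path_edges r = path_edges m1 \<union> path_edges sg \<union> path_edges m2"
    "length m1 + length sg + length m2 = length r + 2"
    using s1'(2-4) s2'(2-4) by auto
qed

lemma path_join3:
  assumes p: "path E p" and q: "path E q" and r: "path E r" and ends: "last p = hd q" "last q = hd r"
    and meet: "set p \<inter> set q \<subseteq> {hd q}" "set q \<inter> set r \<subseteq> {hd r}" "set p \<inter> set r = {}"
  shows "path E (p @ tl q @ tl r)" "hd (p @ tl q @ tl r) = hd p" "last (p @ tl q @ tl r) = last r"
    "set (p @ tl q @ tl r) = set p \<union> set q \<union> set r"
    "path_edges (p @ tl q @ tl r) = path_edges p \<union> path_edges q \<union> path_edges r"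
    "length (p @ tl q @ tl r) = length p + length q + length r - 2"
proof -
  note J1 = path_join[OF p q ends(1) meet(1)]
  have "set (p @ tl q) \<inter> set r \<subseteq> {hd r}" using J1(4) meet(2,3) by blast
  moreover have "last (p @ tl q) = hd r" using J1(3) ends(2) by simp
  ultimately have J2: "path E (p @ tl q @ tl r)" "hd (p @ tl q @ tl r) = hd p" "last (p @ tl q @ tl r) = last r"
    "set (p @ tl q @ tl r) = set (p @ tl q) \<union> set r"
    "path_edges (p @ tl q @ tl r) = path_edges (p @ tl q) \<union> path_edges r"
    "length (p @ tl q @ tl r) = length (p @ tl q) + length r - 1"
    using path_join[OF J1(1) r] J1(2) by simp_all
  show "path E (p @ tl q @ tl r)" "hd (p @ tl q @ tl r) = hd p" "last (p @ tl q @ tl r) = last r"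
    "set (p @ tl q @ tl r) = set p \<union> set q \<union> set r"
    "path_edges (p @ tl q @ tl r) = path_edges p \<union> path_edges q \<union> path_edges r"
    using J1 J2 by simp_all
  have "length p > 0" "length q > 0" "length r > 0" using p q r path_nonempty by blast+
  then show "length (p @ tl q @ tl r) = length p + length q + length r - 2"
    using J1(6) J2(6) by linarith
qed

section \<open>Cycles and parallel paths\<close>

lemma cycle_edges_conv_path_edges: "xs \<noteq> [] \<Longrightarrow> cycle_edges xs = path_edges (xs @ [hd xs])"
proof -
  assume ne: "xs \<noteq> []"
  let ?n = "length xs"
  have "(xs @ [hd xs]) ! Suc i = xs ! ((i + 1) mod ?n)" if "i < ?n" for i
  proof (cases "Suc i < ?n")
    case False
    then have "Suc i = ?n" using that by simp
    then show ?thesis using ne by (simp add: nth_append hd_conv_nth)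
  qed (simp add: nth_append)
  then have "(\<lambda>i. {xs ! i, xs ! ((i + 1) mod ?n)}) ` {i. i < ?n}
      = (\<lambda>i. {(xs @ [hd xs]) ! i, (xs @ [hd xs]) ! Suc i}) ` {i. i < ?n}"
    by (intro image_cong) (simp_all add: nth_append)
  then show ?thesis unfolding cycle_edges_def path_edges_conv_nth by (simp add: setcompr_eq_image)
qed

text \<open>The length condition excludes p = q = [hd p, last p].\<close>

definition parallel_paths :: "'a set set \<Rightarrow> 'a list \<Rightarrow> 'a list \<Rightarrow> bool" where
  "parallel_paths E p q \<longleftrightarrow> path E p \<and> path E q \<and> hd p = hd q \<and> last p = last q \<and> hd p \<noteq> last p
     \<and> set p \<inter> set q = {hd p, last p} \<and> length p + length q \<ge> 5"

lemma parallel_paths_sym: "parallel_paths E p q \<Longrightarrow> parallel_paths E q p"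
  unfolding parallel_paths_def by (auto simp: Int_commute)

lemma parallel_paths_circuit:
  assumes G: "graph V E" and c: "parallel_paths E p q"
  shows "is_circuit V E (path_edges p \<union> path_edges q)"
proof -
  have pp: "path E p" "path E q" and hl: "hd p = hd q" "last p = last q" "hd p \<noteq> last p"
    and int: "set p \<inter> set q = {hd p, last p}" and len: "length p + length q \<ge> 5"
    using c unfolding parallel_paths_def by auto
  have pne: "p \<noteq> []" "q \<noteq> []" using pp path_nonempty by blast+
  obtain m where q: "q = hd p # m @ [last p]"
  proof -
    obtain x t where "q = x # t" "t \<noteq> []" using pne(2) hl by (cases q) (auto split: if_splits)
    then show ?thesis using that hl(1,2) by (metis append_butlast_last_id last_ConsR list.sel(1))
  qed
  have m: "distinct m" "hd p \<notin> set m" "last p \<notin> set m" using pp(2) q unfolding path_def by auto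
  moreover have "set m \<subseteq> set q" using q by auto
  ultimately have m: "distinct m" "set m \<inter> set p = {}" using int by (blast dest: equalityD1)+
  let ?xs = "p @ rev m"
  have xs: "distinct ?xs" "length ?xs \<ge> 3" "?xs \<noteq> []" using pp(1) m len q unfolding path_def by auto
  have "cycle_edges ?xs = path_edges (p @ tl (rev q))"
    using cycle_edges_conv_path_edges[OF xs(3)] pne(1) q by simp
  also have "\<dots> = path_edges p \<union> path_edges q"
    using path_edges_join[OF pne(1), of "rev q"] path_edges_rev[of q] q by simp
  finally have ce: "cycle_edges ?xs = path_edges p \<union> path_edges q" .
  have "length p \<ge> 2" "length q \<ge> 2" using path_length_ge2[OF pne(1) hl(3)] q by auto
  then have "set ?xs \<subseteq> V" using path_vertices[OF G pp(1)] path_vertices[OF G pp(2)] q by auto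
  moreover have "cycle_edges ?xs \<subseteq> E" using pp ce unfolding path_def by blast
  ultimately show ?thesis unfolding is_circuit_def using xs ce by blast
qed

lemma parallel_paths_rev: "parallel_paths E p q \<Longrightarrow> parallel_paths E (rev p) (rev q)"
proof -
  assume c: "parallel_paths E p q"
  then have ne: "p \<noteq> []" "q \<noteq> []" unfolding parallel_paths_def path_def by auto
  show ?thesis using c ne unfolding parallel_paths_def by (auto simp: hd_rev last_rev insert_commute)
qed

lemma cycle_edges_rotate1: "xs \<noteq> [] \<Longrightarrow> cycle_edges (rotate1 xs) = cycle_edges xs"
proof -
  assume ne: "xs \<noteq> []"
  then obtain a t where xs: "xs = a # t" by (cases xs) auto
  show ?thesis
  proof (cases "t = []")
    case True then show ?thesis using xs by simp
  next
    case False
    have "cycle_edges (rotate1 xs) = path_edges ((t @ [a]) @ [hd t])" using cycle_edges_conv_path_edges[of "t @ [a]"] xs False by simp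
    also have "\<dots> = path_edges (t @ [a]) \<union> {{a, hd t}}" using path_edges_append[of "t @ [a]" "[hd t]"] by simp
    also have "\<dots> = path_edges (a # t @ [a])" using False by (simp add: path_edges_Cons)
    also have "\<dots> = cycle_edges xs" using cycle_edges_conv_path_edges[of xs] xs by simp
    finally show ?thesis .
  qed
qed

lemma cycle_edges_rotate: "xs \<noteq> [] \<Longrightarrow> cycle_edges (rotate n xs) = cycle_edges xs"
proof (induction n)
  case 0 then show ?case by simp
next
  case (Suc n)
  have "rotate n xs \<noteq> []" using Suc.prems by simp
  then show ?case using Suc cycle_edges_rotate1[of "rotate n xs"] by (simp add: rotate_Suc)
qed

lemma cycle_split_at_hd:
  assumes ys: "distinct ys" "length ys \<ge> 3" "cycle_edges ys \<subseteq> E" and d: "d \<in> set ys" "d \<noteq> hd ys"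
  obtains p q where "parallel_paths E p q" "hd p = hd ys" "last p = d"
    "path_edges p \<union> path_edges q = cycle_edges ys" "set p \<union> set q = set ys"
proof -
  have ne: "ys \<noteq> []" using d by auto
  have cyc: "cycle_edges ys = insert {last ys, hd ys} (path_edges ys)"
    using cycle_edges_conv_path_edges[OF ne] ne by (simp add: path_edges_append)
  then have "path E ys" using ys(1,3) ne unfolding path_def by simp
  then obtain p D where s: "splits_at E ys d p D" by (rule splits_at_exists[OF _ d(1)])
  then have p: "path E p" "hd p = hd ys" "last p = d" and D: "path E D" "hd D = d" "last D = last ys"
    and pD: "set p \<inter> set D = {d}" "set p \<union> set D = set ys" "path_edges p \<union> path_edges D = path_edges ys"
      "length p + length D = length ys + 1"
    unfolding splits_at_def by auto
  let ?q = "hd ys # rev D"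
  have "hd ys \<in> set p" using p(1,2) path_nonempty hd_in_set by metis
  then have hdD: "hd ys \<notin> set D" using pD(1) d(2) by (metis IntI singletonD)
  have Dne: "D \<noteq> []" using D(1) path_nonempty by blast
  have q_edges: "path_edges ?q = insert {last ys, hd ys} (path_edges D)"
    using Dne D(3) by (simp add: path_edges_Cons hd_rev insert_commute)
  have "path E ?q" using D(1) hdD cyc ys(3) q_edges unfolding path_def by auto
  moreover have "set p \<inter> set ?q = {hd p, last p}" using pD(1) p(2,3) \<open>hd ys \<in> set p\<close> by auto
  moreover have "length p + length ?q \<ge> 5" using pD(4) ys(2) by simp
  ultimately have "parallel_paths E p ?q"
    unfolding parallel_paths_def using p D(2) Dne d(2) by (simp add: last_rev)
  moreover have "path_edges p \<union> path_edges ?q = cycle_edges ys" using cyc pD(3) q_edges by auto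
  moreover have "set p \<union> set ?q = set ys" using pD(2) \<open>hd ys \<in> set p\<close> by auto
  ultimately show ?thesis using that[OF _ p(2,3)] by simp
qed

lemma cycle_split:
  assumes xs: "distinct xs" "length xs \<ge> 3" "cycle_edges xs \<subseteq> E"
    and cd: "c \<in> set xs" "d \<in> set xs" "c \<noteq> d"
  obtains p q where "parallel_paths E p q" "hd p = c" "last p = d"
    "path_edges p \<union> path_edges q = cycle_edges xs" "set p \<union> set q = set xs"
proof -
  have ne: "xs \<noteq> []" using cd by auto
  obtain i where i: "i < length xs" "xs ! i = c" using cd(1) by (meson in_set_conv_nth)
  have rot: "hd (rotate i xs) = c" "cycle_edges (rotate i xs) = cycle_edges xs"
    using i ne cycle_edges_rotate[OF ne] by (simp_all add: hd_rotate_conv_nth)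
  obtain p q where "parallel_paths E p q" "hd p = hd (rotate i xs)" "last p = d"
    "path_edges p \<union> path_edges q = cycle_edges (rotate i xs)" "set p \<union> set q = set (rotate i xs)"
    by (rule cycle_split_at_hd[of "rotate i xs" E d]) (use xs cd rot in auto)
  then show thesis using that rot by simp
qed

section \<open>Ears in 2-connected graphs\<close>

lemma rtranclp_path_to_set:
  assumes "R\<^sup>*\<^sup>* x y" "y \<in> W"
  shows "\<exists>zs. zs \<noteq> [] \<and> distinct zs \<and> successively R zs \<and> hd zs = x \<and> last zs \<in> W
    \<and> (\<forall>u\<in>set zs. u \<in> W \<longrightarrow> u = last zs)"
  using assms
proof (induction rule: converse_rtranclp_induct)
  case base
  then show ?case by (intro exI[of _ "[y]"]) simp
next
  case (step x z)
  then obtain zs where zs: "zs \<noteq> []" "distinct zs" "successively R zs" "hd zs = z" "last zs \<in> W"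
    "\<forall>u\<in>set zs. u \<in> W \<longrightarrow> u = last zs"
    by blast
  consider "x \<in> W" | "x \<notin> W" "x \<in> set zs" | "x \<notin> W" "x \<notin> set zs" by blast
  then show ?case
  proof cases
    case 1
    then show ?thesis by (intro exI[of _ "[x]"]) simp
  next
    case 2
    then obtain zs1 zs2 where sp: "zs = zs1 @ x # zs2" by (meson split_list)
    then have "successively R (x # zs2)" "distinct (x # zs2)" "last (x # zs2) = last zs"
      using zs(2,3) 2(1) zs(5) by (auto simp: successively_append_iff)
    then show ?thesis using zs(5,6) sp by (intro exI[of _ "x # zs2"]) auto
  next
    case 3
    then show ?thesis using zs step(1) by (intro exI[of _ "x # zs"]) (auto simp: successively_Cons)
  qed
qed

lemma successively_all:
  assumes "successively R xs" "\<And>x y. R x y \<Longrightarrow> P y" "xs \<noteq> []" "P (hd xs)"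
  shows "\<forall>z\<in>set xs. P z"
  using assms
proof (induction xs)
  case Nil then show ?case by simp
next
  case (Cons x xs)
  show ?case
  proof (cases xs)
    case Nil then show ?thesis using Cons.prems by simp
  next
    case (Cons y ys)
    then have "R x y" "successively R xs" using Cons.prems(1) by auto
    then have "P y" using Cons.prems(2) by blast
    then have "\<forall>z\<in>set xs. P z" using Cons.IH[OF \<open>successively R xs\<close> Cons.prems(2)] Cons by simp
    then show ?thesis using Cons.prems(4) by simp
  qed
qed

definition ear :: "'a set set \<Rightarrow> 'a set \<Rightarrow> 'a list \<Rightarrow> bool" where
  "ear E W Q \<longleftrightarrow> path E Q \<and> hd Q \<in> W \<and> last Q \<in> W \<and> hd Q \<noteq> last Q
     \<and> (\<forall>v\<in>set Q. v \<in> W \<longrightarrow> v = hd Q \<or> v = last Q)"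

lemma earI:
  assumes "path E Q" "hd Q \<in> W" "last Q \<in> W" "hd Q \<noteq> last Q"
    "\<And>v. v \<in> set Q \<Longrightarrow> v \<in> W \<Longrightarrow> v = hd Q \<or> v = last Q"
  shows "ear E W Q"
  unfolding ear_def using assms by blast

lemma ear_path: "ear E W Q \<Longrightarrow> path E Q"
  unfolding ear_def by blast

lemma ear_nonempty: "ear E W Q \<Longrightarrow> Q \<noteq> []"
  unfolding ear_def path_def by blast

lemma ear_ends: "ear E W Q \<Longrightarrow> hd Q \<in> W \<and> last Q \<in> W \<and> hd Q \<noteq> last Q"
  unfolding ear_def by blast

lemma ear_meets_only_at_ends: "ear E W Q \<Longrightarrow> v \<in> set Q \<Longrightarrow> v \<in> W \<Longrightarrow> v = hd Q \<or> v = last Q"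
  unfolding ear_def by blast

lemma ear_length: "ear E W Q \<Longrightarrow> length Q \<ge> 2"
  using path_length_ge2 ear_nonempty ear_ends by metis

lemma ear_rev [simp]: "ear E W (rev Q) \<longleftrightarrow> ear E W Q"
  unfolding ear_def using path_nonempty by (auto simp: hd_rev last_rev)

lemma ear_through_leaving_edge:
  assumes G: "graph V E" "two_connected V E" and W: "W \<subseteq> V" "v \<in> W" "w \<notin> W" "{v, w} \<in> E"
    "w' \<in> W" "w' \<noteq> v"
  shows "\<exists>Q. ear E W Q \<and> {v, w} \<in> path_edges Q \<and> w \<in> set Q"
proof -
  define R where "R = (\<lambda>x y. x \<in> V - {v} \<and> y \<in> V - {v} \<and> {x, y} \<in> {e\<in>E. v \<notin> e})"
  have w: "w \<in> V - {v}" using graph_edge[OF G(1) W(4)] by auto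
  have "connected_graph (V - {v}) {e\<in>E. v \<notin> e}" using G(2) W(1,2) unfolding two_connected_def by blast
  then have "R\<^sup>*\<^sup>* w w'" using w W(1,5,6) unfolding connected_graph_def R_def by blast
  then obtain zs where zs: "zs \<noteq> []" "distinct zs" "successively R zs" "hd zs = w" "last zs \<in> W"
    "\<forall>u\<in>set zs. u \<in> W \<longrightarrow> u = last zs"
    using rtranclp_path_to_set W(5) by metis
  have "\<forall>z\<in>set zs. z \<in> V - {v}"
    using successively_all[OF zs(3) _ zs(1)] zs(4) w unfolding R_def by blast
  moreover have "path_edges zs \<subseteq> E"
    unfolding path_edges_subset_iff using zs(3) by (rule successively_mono) (simp add: R_def)
  ultimately have "path E (v # zs)"
    unfolding path_def using W(4) zs(1,2,4) by (auto simp: path_edges_Cons)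
  moreover have "last (v # zs) \<noteq> v" using \<open>\<forall>z\<in>set zs. z \<in> V - {v}\<close> zs(1) by simp
  ultimately have "ear E W (v # zs)" using zs(1,5,6) W(2) by (intro earI) auto
  moreover have "{v, w} \<in> path_edges (v # zs)" "w \<in> set (v # zs)" using zs(1,4) by (auto simp: path_edges_Cons)
  ultimately show ?thesis by blast
qed

lemma ear_reroute_one_end:
  assumes Q: "ear E W Q" and Q': "ear E (W \<union> set Q) Q'" and xW: "hd Q' \<in> W" and y: "last Q' \<notin> W"
    and s: "splits_at E Q (last Q') S T" and x: "hd Q' \<notin> set T"
  shows "ear E W (Q' @ tl T)" "path_edges Q' \<subseteq> path_edges (Q' @ tl T)"
proof -
  have S: "path E S" "hd S = hd Q" and T: "path E T" "hd T = last Q'" "last T = last Q"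
    and ST: "set S \<inter> set T = {last Q'}" "set S \<union> set T = set Q"
    using s unfolding splits_at_def by auto
  have "hd Q \<in> set S" using hd_in_set[OF path_nonempty[OF S(1)]] S(2) by simp
  then have hdQ: "hd Q \<notin> set T" using ST(1) ear_ends[OF Q] y by (metis IntI singletonD)
  have QQ': "v = hd Q' \<or> v = last Q'" if "v \<in> set Q'" "v \<in> set Q" for v
    using ear_meets_only_at_ends[OF Q'] that by blast
  have "set Q' \<inter> set T \<subseteq> {hd T}"
  proof
    fix v assume "v \<in> set Q' \<inter> set T"
    then show "v \<in> {hd T}" using QQ'[of v] x ST(2) T(2) by auto
  qed
  note J = path_join[OF ear_path[OF Q'] T(1) T(2)[symmetric] this]
  show "ear E W (Q' @ tl T)"
  proof (rule earI)
    show "last (Q' @ tl T) \<in> W" "hd (Q' @ tl T) \<noteq> last (Q' @ tl T)"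
      using J(2,3) T(3) ear_ends[OF Q] x last_in_set path_nonempty[OF T(1)] by metis+
    fix v assume v: "v \<in> set (Q' @ tl T)" "v \<in> W"
    then consider "v \<in> set Q'" | "v \<in> set T" using J(4) by blast
    then show "v = hd (Q' @ tl T) \<or> v = last (Q' @ tl T)"
    proof cases
      case 1
      then show ?thesis using ear_meets_only_at_ends[OF Q' 1] v(2) y J(2) by auto
    next
      case 2
      then show ?thesis using ear_meets_only_at_ends[OF Q _ v(2)] ST(2) hdQ J(3) T(3) by auto
    qed
  qed (use J xW in auto)
  show "path_edges Q' \<subseteq> path_edges (Q' @ tl T)" using J(5) by blast
qed

lemma ear_reroute_inner:
  assumes Q: "ear E W Q" and Q': "ear E (W \<union> set Q) Q'" and xy: "hd Q' \<notin> W" "last Q' \<notin> W"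
    and s1: "splits_at E Q (hd Q') Q1 T" and s2: "splits_at E T (last Q') S Q2"
  shows "ear E W (Q1 @ tl Q' @ tl Q2)" "path_edges Q' \<subseteq> path_edges (Q1 @ tl Q' @ tl Q2)"
proof -
  have Q1: "path E Q1" "hd Q1 = hd Q" "last Q1 = hd Q'" and T: "hd T = hd Q'" "last T = last Q"
    and s1': "set Q1 \<inter> set T = {hd Q'}" "set Q1 \<union> set T = set Q"
    using s1 unfolding splits_at_def by auto
  have S: "path E S" "hd S = hd Q'" and Q2: "path E Q2" "hd Q2 = last Q'" "last Q2 = last Q"
    and s2': "set S \<inter> set Q2 = {last Q'}" "set S \<union> set Q2 = set T"
    using s2 T unfolding splits_at_def by auto
  have ne: "hd Q' \<noteq> last Q'" using ear_ends[OF Q'] by simp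
  have "hd Q' \<in> set S" using hd_in_set[OF path_nonempty[OF S(1)]] S(2) by simp
  then have x2: "hd Q' \<notin> set Q2" using s2'(1) ne by (metis IntI singletonD)
  have "last Q' \<in> set T" using s2'(2) hd_in_set[OF path_nonempty[OF Q2(1)]] Q2(2) by auto
  then have y1: "last Q' \<notin> set Q1" using s1'(1) ne by (metis IntI singletonD)
  have QQ': "v = hd Q' \<or> v = last Q'" if "v \<in> set Q'" "v \<in> set Q" for v
    using ear_meets_only_at_ends[OF Q'] that by blast
  have meet: "set Q1 \<inter> set Q' \<subseteq> {hd Q'}" "set Q' \<inter> set Q2 \<subseteq> {hd Q2}" "set Q1 \<inter> set Q2 = {}"
  proof -
    show "set Q1 \<inter> set Q' \<subseteq> {hd Q'}"
    proof
      fix v assume "v \<in> set Q1 \<inter> set Q'"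
      then show "v \<in> {hd Q'}" using QQ'[of v] y1 s1'(2) by auto
    qed
    show "set Q' \<inter> set Q2 \<subseteq> {hd Q2}"
    proof
      fix v assume "v \<in> set Q' \<inter> set Q2"
      then show "v \<in> {hd Q2}" using QQ'[of v] x2 s1'(2) s2'(2) Q2(2) by auto
    qed
    show "set Q1 \<inter> set Q2 = {}" using s1'(1) s2'(2) x2 by (blast dest: equalityD1)
  qed
  note J = path_join3[OF Q1(1) ear_path[OF Q'] Q2(1) Q1(3) Q2(2)[symmetric] meet]
  show "ear E W (Q1 @ tl Q' @ tl Q2)"
  proof (rule earI)
    fix v assume v: "v \<in> set (Q1 @ tl Q' @ tl Q2)" "v \<in> W"
    then consider "v \<in> set Q'" | "v \<in> set Q" using J(4) s1'(2) s2'(2) by blast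
    then show "v = hd (Q1 @ tl Q' @ tl Q2) \<or> v = last (Q1 @ tl Q' @ tl Q2)"
    proof cases
      case 1
      then show ?thesis using ear_meets_only_at_ends[OF Q' 1] v(2) xy by auto
    next
      case 2
      then show ?thesis using ear_meets_only_at_ends[OF Q 2 v(2)] J(2,3) Q1(2) Q2(3) by auto
    qed
  qed (use J Q1(2) Q2(3) ear_ends[OF Q] in auto)
  show "path_edges Q' \<subseteq> path_edges (Q1 @ tl Q' @ tl Q2)" using J(5) by blast
qed

lemma ear_reroute:
  assumes Q: "ear E W Q" and Q': "ear E (W \<union> set Q) Q'"
  shows "\<exists>Q''. ear E W Q'' \<and> path_edges Q' \<subseteq> path_edges Q''"
proof -
  have one_end: "\<exists>Q''. ear E W Q'' \<and> path_edges P \<subseteq> path_edges Q''"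
    if P: "ear E (W \<union> set Q) P" "hd P \<in> W" "last P \<notin> W" for P
  proof -
    have "last P \<in> set Q" using ear_ends[OF P(1)] P(3) by auto
    then obtain S T where s: "splits_at E Q (last P) S T" by (rule splits_at_exists[OF ear_path[OF Q]])
    show ?thesis
    proof (cases "hd P \<in> set T")
      case False
      then show ?thesis using ear_reroute_one_end[OF Q P s] by blast
    next
      case True
      then have "hd P \<notin> set (rev S)" using s ear_ends[OF P(1)] unfolding splits_at_def by auto
      moreover have "ear E W (rev Q)" "ear E (W \<union> set (rev Q)) P" using Q P by simp_all
      ultimately show ?thesis using ear_reroute_one_end[OF _ _ P(2,3) splits_at_rev[OF s]] by blast
    qed
  qed
  have inner: "\<exists>Q''. ear E W Q'' \<and> path_edges Q' \<subseteq> path_edges Q''"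
    if Q0: "ear E W Q0" "ear E (W \<union> set Q0) Q'" and xy: "hd Q' \<notin> W" "last Q' \<notin> W"
      and s1: "splits_at E Q0 (hd Q') Q1 T" and y: "last Q' \<in> set T" for Q0 Q1 T
  proof -
    have "path E T" using s1 unfolding splits_at_def by blast
    then obtain S Q2 where "splits_at E T (last Q') S Q2" by (rule splits_at_exists[OF _ y])
    then show ?thesis using ear_reroute_inner[OF Q0 xy s1] by blast
  qed
  consider "hd Q' \<in> W" "last Q' \<in> W" | "hd Q' \<in> W" "last Q' \<notin> W" | "hd Q' \<notin> W" "last Q' \<in> W"
    | "hd Q' \<notin> W" "last Q' \<notin> W"
    by blast
  then show ?thesis
  proof cases
    case 1
    have "ear E W Q'" using 1 ear_ends[OF Q'] ear_meets_only_at_ends[OF Q'] by (intro earI ear_path[OF Q']) auto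
    then show ?thesis by blast
  next
    case 2
    then show ?thesis using one_end[OF Q'] by blast
  next
    case 3
    then have "hd (rev Q') \<in> W" "last (rev Q') \<notin> W" using ear_nonempty[OF Q'] by (simp_all add: hd_rev last_rev)
    then show ?thesis using one_end[of "rev Q'"] Q' by simp
  next
    case 4
    then have "hd Q' \<in> set Q" using ear_ends[OF Q'] by auto
    then obtain Q1 T where s1: "splits_at E Q (hd Q') Q1 T" by (rule splits_at_exists[OF ear_path[OF Q]])
    show ?thesis
    proof (cases "last Q' \<in> set T")
      case True
      then show ?thesis using inner[OF Q Q' 4 s1] by blast
    next
      case False
      then have "last Q' \<in> set (rev Q1)" using s1 ear_ends[OF Q'] 4 unfolding splits_at_def by auto
      moreover have "ear E W (rev Q)" "ear E (W \<union> set (rev Q)) Q'" using Q Q' by simp_all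
      ultimately show ?thesis using inner[OF _ _ 4 splits_at_rev[OF s1]] by blast
    qed
  qed
qed

text \<open>Induction along a walk from W to the edge: where the walk leaves W, an ear through the
  leaving edge is added to W, and the ear found for the enlarged set is rerouted to one of W.\<close>

lemma ear_through_edge_walk:
  assumes G: "graph V E" "two_connected V E" and z: "{u, v} \<in> E"
    and q: "successively (\<lambda>x y. x \<in> V \<and> y \<in> V \<and> {x, y} \<in> E) q" "q \<noteq> []" "last q = u"
    and W: "W \<subseteq> V" "hd q \<in> W" "a \<in> W" "b \<in> W" "a \<noteq> b"
  shows "\<exists>Q. ear E W Q \<and> {u, v} \<in> path_edges Q"
  using q W
proof (induction q arbitrary: W)
  case Nil then show ?case by simp
next
  case (Cons q0 rest)
  have uv: "u \<in> V" "v \<in> V" "u \<noteq> v" using graph_edge[OF G(1) z] by auto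
  have "\<exists>w'. w' \<in> W \<and> w' \<noteq> q0" using Cons.prems(6-8) by metis
  then obtain w' where w': "w' \<in> W" "w' \<noteq> q0" by blast
  show ?case
  proof (cases rest)
    case Nil
    then have q0u: "q0 = u" using Cons.prems(3) by simp
    have uW: "u \<in> W" using Cons.prems(5) q0u by simp
    show ?thesis
    proof (cases "v \<in> W")
      case True
      have "ear E W [u, v]"
      proof (rule earI)
        show "path E [u, v]" unfolding path_def using uv z by simp
      qed (use uW True uv in auto)
      then show ?thesis by (intro exI[of _ "[u, v]"]) simp
    next
      case False
      show ?thesis using ear_through_leaving_edge[OF G Cons.prems(4) uW False z, of w'] w' q0u by blast
    qed
  next
    case (Cons q1 rest')
    have R: "q0 \<in> V" "q1 \<in> V" "{q0, q1} \<in> E" "successively (\<lambda>x y. x \<in> V \<and> y \<in> V \<and> {x, y} \<in> E) rest"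
      using Cons.prems(1) Cons by auto
    have lr: "last rest = u" "rest \<noteq> []" using Cons.prems(3) Cons by auto
    have q0W: "q0 \<in> W" using Cons.prems(5) by simp
    show ?thesis
    proof (cases "q1 \<in> W")
      case True
      have "hd rest \<in> W" using True Cons by simp
      then show ?thesis using Cons.IH[OF R(4) lr(2) lr(1) Cons.prems(4) _ Cons.prems(6-8)] by blast
    next
      case False
      obtain Q where Q: "ear E W Q" "q1 \<in> set Q"
        using ear_through_leaving_edge[OF G Cons.prems(4) q0W False R(3) w'] by blast
      have QV: "set Q \<subseteq> V" using path_vertices[OF G(1) ear_path[OF Q(1)] ear_length[OF Q(1)]] .
      have W'V: "W \<union> set Q \<subseteq> V" using QV Cons.prems(4) by blast
      have "hd rest \<in> W \<union> set Q" using Q(2) Cons by simp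
      then obtain Q' where Q': "ear E (W \<union> set Q) Q'" "{u, v} \<in> path_edges Q'"
        using Cons.IH[OF R(4) lr(2) lr(1) W'V _ _ _ Cons.prems(8)] Cons.prems(6,7) by blast
      then show ?thesis using ear_reroute[OF Q(1) Q'(1)] Q'(2) by blast
    qed
  qed
qed

lemma ear_through_edge:
  assumes G: "graph V E" "two_connected V E" and W: "W \<subseteq> V" "a \<in> W" "b \<in> W" "a \<noteq> b" and z: "z \<in> E"
  shows "\<exists>Q. ear E W Q \<and> z \<in> path_edges Q"
proof -
  obtain u v where uv: "z = {u, v}" "u \<in> V" using G(1) z unfolding graph_def by blast
  have "connected_graph V E" using G(2) unfolding two_connected_def by blast
  then have "(\<lambda>x y. x \<in> V \<and> y \<in> V \<and> {x, y} \<in> E)\<^sup>*\<^sup>* a u"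
    using W(1,2) uv(2) unfolding connected_graph_def by blast
  then obtain q where q: "q \<noteq> []" "hd q = a" "last q = u"
    "successively (\<lambda>x y. x \<in> V \<and> y \<in> V \<and> {x, y} \<in> E) q"
    using rtranclp_path_to_set[of _ a u "{u}"] by auto
  have "{u, v} \<in> E" "hd q \<in> W" using z uv(1) q(2) W(2) by simp_all
  then show ?thesis using ear_through_edge_walk[OF G _ q(4,1,3) W(1) _ W(2-4)] uv(1) by blast

qed

lemma parallel_pathsI:
  assumes "path E p" "path E q" "hd p = hd q" "last p = last q" "hd p \<noteq> last p"
    "set p \<inter> set q \<subseteq> {hd p, last p}" "length p + length q \<ge> 5"
  shows "parallel_paths E p q"
proof -
  have "hd p \<in> set q" "last p \<in> set q" using assms(2-4) path_nonempty[OF assms(2)] by auto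
  moreover have "hd p \<in> set p" "last p \<in> set p" using path_nonempty[OF assms(1)] by auto
  ultimately have "set p \<inter> set q = {hd p, last p}" using assms(6) by blast
  then show ?thesis unfolding parallel_paths_def using assms by simp
qed

lemma ear_parallel:
  assumes R: "ear E W R" and p: "path E p" "hd p = hd R" "last p = last R" "set p \<subseteq> W"
    and new: "\<not> path_edges R \<subseteq> path_edges p"
  shows "parallel_paths E p R"
proof -
  have ends: "hd p \<noteq> last p" using ear_ends[OF R] p(2,3) by simp
  have "set p \<inter> set R \<subseteq> {hd p, last p}"
  proof
    fix v assume "v \<in> set p \<inter> set R"
    then show "v \<in> {hd p, last p}" using ear_meets_only_at_ends[OF R, of v] p(2-4) by auto
  qed
  moreover have "length p + length R \<ge> 5"
  proof (rule ccontr)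
    assume "\<not> ?thesis"
    moreover have "length p \<ge> 2" using path_length_ge2[OF path_nonempty[OF p(1)] ends] .
    moreover have "length R \<ge> 2" using ear_length[OF R] .
    ultimately have "p = R" using length2_eq[of p R] p(2,3) by simp
    then show False using new by simp
  qed
  ultimately show ?thesis using parallel_pathsI[OF p(1) ear_path[OF R] p(2,3) ends] by blast
qed

lemma cycle_ear_theta:
  assumes xs: "distinct xs" "length xs \<ge> 3" "cycle_edges xs \<subseteq> E"
    and Q: "ear E (set xs) Q" and new: "\<not> path_edges Q \<subseteq> cycle_edges xs"
  obtains p q where "parallel_paths E p q" "parallel_paths E p Q" "parallel_paths E q Q"
    "hd p = hd Q" "last p = last Q" "path_edges p \<union> path_edges q = cycle_edges xs"
    "set p \<union> set q = set xs"
proof -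
  have ends: "hd Q \<in> set xs" "last Q \<in> set xs" "hd Q \<noteq> last Q" using ear_ends[OF Q] by auto
  obtain p q where pq: "parallel_paths E p q" "hd p = hd Q" "last p = last Q"
    "path_edges p \<union> path_edges q = cycle_edges xs" "set p \<union> set q = set xs"
    by (rule cycle_split[OF xs ends])
  have pq': "path E p" "path E q" "hd q = hd Q" "last q = last Q"
    using pq(1-3) unfolding parallel_paths_def by auto
  have "set p \<subseteq> set xs" "set q \<subseteq> set xs" using pq(5) by auto
  moreover have "\<not> path_edges Q \<subseteq> path_edges p" "\<not> path_edges Q \<subseteq> path_edges q"
    using new pq(4) by auto
  ultimately have "parallel_paths E p Q" "parallel_paths E q Q"
    using ear_parallel[OF Q pq'(1) pq(2,3)] ear_parallel[OF Q pq'(2-4)] by auto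
  then show ?thesis using that pq by blast
qed

section \<open>Circuits covering each other\<close>

definition two_edges_at :: "'a set set \<Rightarrow> 'a \<Rightarrow> bool" where
  "two_edges_at Z v \<longleftrightarrow> (\<exists>A B. A \<in> Z \<and> B \<in> Z \<and> A \<noteq> B \<and> v \<in> A \<and> v \<in> B
     \<and> (\<forall>k\<in>Z. v \<in> k \<longrightarrow> k = A \<or> k = B))"

lemma path_edges_subset_set: "e \<in> path_edges p \<Longrightarrow> e \<subseteq> set p"
  by (induction p rule: path_edges.induct) auto

lemma cycle_edges_two_edges_at_hd:
  assumes "distinct ys" "length ys \<ge> 3"
  shows "two_edges_at (cycle_edges ys) (hd ys)"
proof -
  obtain u w rest where ys: "ys = u # w # rest" "rest \<noteq> []"
    using assms(2) by (cases ys rule: path_edges.cases) (auto simp: Suc_le_eq)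
  define ws where "ws = w # rest"
  have ys': "ys = u # ws" using ys unfolding ws_def by simp
  have ws: "ws \<noteq> []" "u \<notin> set ws" "hd ws \<noteq> last ws"
    using assms(1) ys last_in_set[OF ys(2)] unfolding ws_def by auto

  have edges: "cycle_edges ys = insert {u, hd ws} (insert {last ws, u} (path_edges ws))"
    using cycle_edges_conv_path_edges[of ys] ys' ws(1) by (auto simp: path_edges_append path_edges_Cons)
  have "u \<notin> e" if "e \<in> path_edges ws" for e using path_edges_subset_set[OF that] ws(2) by blast
  moreover have "{u, hd ws} \<noteq> {last ws, u}" using ws(3) by (auto simp: doubleton_eq_iff)
  ultimately show ?thesis unfolding two_edges_at_def edges
    by (intro exI[of _ "{u, hd ws}"] exI[of _ "{last ws, u}"]) (auto simp: ys')
qed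

lemma circuit_two_edges_at:
  assumes "is_circuit V E Z" "h \<in> Z" "v \<in> h"
  shows "two_edges_at Z v"
proof -
  obtain xs where xs: "distinct xs" "length xs \<ge> 3" "Z = cycle_edges xs"
    using assms(1) unfolding is_circuit_def by blast
  then have "xs \<noteq> []" by auto
  then have "v \<in> set xs"
    using assms(2,3) path_edges_subset_set xs(3) cycle_edges_conv_path_edges by fastforce
  then obtain i where i: "i < length xs" "xs ! i = v" by (meson in_set_conv_nth)
  have "hd (rotate i xs) = v" using i \<open>xs \<noteq> []\<close> by (simp add: hd_rotate_conv_nth)
  moreover have "cycle_edges (rotate i xs) = Z" using cycle_edges_rotate[OF \<open>xs \<noteq> []\<close>] xs(3) by simp
  ultimately show ?thesis using cycle_edges_two_edges_at_hd[of "rotate i xs"] xs(1,2) by simp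
qed

lemma two_edges_at_other:
  assumes "two_edges_at Z v" "h \<in> Z" "v \<in> h"
  obtains h' where "h' \<in> Z" "v \<in> h'" "h' \<noteq> h" "\<forall>k\<in>Z. v \<in> k \<longrightarrow> k = h \<or> k = h'"
  using assms unfolding two_edges_at_def by metis

lemma two_edges_at_propagate:
  assumes Z: "two_edges_at Z1 v" "two_edges_at Z2 v" "two_edges_at Z3 v"
    and cov: "Z1 \<subseteq> Z2 \<union> Z3" "Z2 \<subseteq> Z1 \<union> Z3" "Z3 \<subseteq> Z1 \<union> Z2"
    and h: "h \<in> Z1" "h \<in> Z2" "h \<in> Z3" "v \<in> h" and h': "h' \<in> Z1" "v \<in> h'" "h' \<noteq> h"
  shows "h' \<in> Z2 \<and> h' \<in> Z3"
proof -
  obtain h1 where h1: "\<forall>k\<in>Z1. v \<in> k \<longrightarrow> k = h \<or> k = h1"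
    using two_edges_at_other[OF Z(1) h(1,4)] by blast
  obtain h2 where h2: "h2 \<in> Z2" "v \<in> h2" "h2 \<noteq> h" "\<forall>k\<in>Z2. v \<in> k \<longrightarrow> k = h \<or> k = h2"
    using two_edges_at_other[OF Z(2) h(2,4)] by blast
  obtain h3 where h3: "h3 \<in> Z3" "v \<in> h3" "h3 \<noteq> h" "\<forall>k\<in>Z3. v \<in> k \<longrightarrow> k = h \<or> k = h3"
    using two_edges_at_other[OF Z(3) h(3,4)] by blast
  have in1: "k = h'" if "k \<in> Z1" "v \<in> k" "k \<noteq> h" for k using h1 h' that by blast
  have in2: "k = h2" if "k \<in> Z2" "v \<in> k" "k \<noteq> h" for k using h2(4) that by blast
  have in3: "k = h3" if "k \<in> Z3" "v \<in> k" "k \<noteq> h" for k using h3(4) that by blast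
  have "h2 = h' \<or> h2 = h3" using cov(2) h2(1-3) in1 in3 by blast
  moreover have "h3 = h' \<or> h3 = h2" using cov(3) h3(1-3) in1 in2 by blast
  moreover have "h' = h2 \<or> h' = h3" using cov(1) h' in2 in3 by blast
  ultimately show ?thesis using h2(1) h3(1) by auto
qed

lemma path_edges_closed_subset:
  assumes "path_edges w \<inter> S \<noteq> {}"
    and closed: "\<And>h h' v. h \<in> S \<Longrightarrow> h' \<in> path_edges w \<Longrightarrow> v \<in> h \<Longrightarrow> v \<in> h' \<Longrightarrow> h' \<in> S"
  shows "path_edges w \<subseteq> S"
  using assms
proof (induction w rule: path_edges.induct)
  case (1 a b xs)
  have closed': "h' \<in> S" if "h \<in> S" "h' \<in> path_edges (b # xs)" "v \<in> h" "v \<in> h'" for h h' v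
    using "1.prems"(2) that by auto
  show ?case
  proof (cases "path_edges (b # xs) \<inter> S = {}")
    case True
    then have "{a, b} \<in> S" using "1.prems"(1) by auto
    moreover have "path_edges (b # xs) = {}"
    proof (cases xs)
      case (Cons c ys)
      then show ?thesis using closed'[OF \<open>{a, b} \<in> S\<close>, of "{b, c}" b] True by auto
    qed simp
    ultimately show ?thesis by simp
  next
    case False
    then have sub: "path_edges (b # xs) \<subseteq> S" using "1.IH" closed' by blast
    have "{a, b} \<in> S"
    proof (cases xs)
      case Nil
      then show ?thesis using False by simp
    next
      case (Cons c ys)
      then show ?thesis using "1.prems"(2)[of "{b, c}" "{a, b}" b] sub by auto
    qed
    then show ?thesis using sub by simp
  qed
qed auto

text \<open>The edges of Z1 lying in all three circuits are closed under passing to an adjacent edge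
  of Z1, because each circuit has exactly two edges at a common vertex.\<close>

lemma three_circuits_subset:
  assumes Z: "is_circuit V E Z1" "is_circuit V E Z2" "is_circuit V E Z3"
    and cov: "Z1 \<subseteq> Z2 \<union> Z3" "Z2 \<subseteq> Z1 \<union> Z3" "Z3 \<subseteq> Z1 \<union> Z2"
    and g: "g \<in> Z1" "g \<in> Z2" "g \<in> Z3"
  shows "Z1 \<subseteq> Z2 \<inter> Z3"
proof -
  obtain xs where "length xs \<ge> 3" "Z1 = cycle_edges xs" using Z(1) unfolding is_circuit_def by blast
  moreover have "xs \<noteq> []" using \<open>length xs \<ge> 3\<close> by auto
  ultimately have xs: "xs \<noteq> []" "Z1 = path_edges (xs @ [hd xs])" using cycle_edges_conv_path_edges by auto
  have "path_edges (xs @ [hd xs]) \<subseteq> Z1 \<inter> Z2 \<inter> Z3"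
  proof (rule path_edges_closed_subset)
    show "path_edges (xs @ [hd xs]) \<inter> (Z1 \<inter> Z2 \<inter> Z3) \<noteq> {}" using g xs(2) by blast
    fix h h' v assume h: "h \<in> Z1 \<inter> Z2 \<inter> Z3" and h': "h' \<in> path_edges (xs @ [hd xs])" "v \<in> h" "v \<in> h'"
    have h1: "h \<in> Z1" "h \<in> Z2" "h \<in> Z3" using h by auto
    have "h' \<in> Z2 \<and> h' \<in> Z3" if "h' \<noteq> h"
      using two_edges_at_propagate[OF circuit_two_edges_at[OF Z(1) h1(1) h'(2)]
          circuit_two_edges_at[OF Z(2) h1(2) h'(2)] circuit_two_edges_at[OF Z(3) h1(3) h'(2)]
          cov h1 h'(2)] h'(1,3) xs(2) that by simp
    then show "h' \<in> Z1 \<inter> Z2 \<inter> Z3" using h h'(1) xs(2) by (cases "h' = h") auto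
  qed
  then show ?thesis using xs(2) by blast
qed

lemma three_circuits_eq:
  assumes Z: "is_circuit V E Z1" "is_circuit V E Z2" "is_circuit V E Z3"
    and cov: "Z1 \<subseteq> Z2 \<union> Z3" "Z2 \<subseteq> Z1 \<union> Z3" "Z3 \<subseteq> Z1 \<union> Z2"
    and g: "g \<in> Z1" "g \<in> Z2" "g \<in> Z3"
  shows "Z1 = Z2 \<and> Z1 = Z3"
proof -
  have "Z1 \<subseteq> Z2 \<inter> Z3" by (rule three_circuits_subset[OF Z cov g])
  moreover have "Z2 \<subseteq> Z1 \<inter> Z3"
    by (rule three_circuits_subset[OF Z(2,1,3) cov(2,1)]) (use cov(3) g in auto)
  moreover have "Z3 \<subseteq> Z1 \<inter> Z2"
    by (rule three_circuits_subset[OF Z(3,1,2) cov(3)]) (use cov(1,2) g in auto)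
  ultimately show ?thesis by blast
qed

section \<open>Thetas all of whose circuits have the same image\<close>

lemma subset_Un_disjoint_empty: "X \<subseteq> A \<union> B \<Longrightarrow> X \<inter> A = {} \<Longrightarrow> X \<inter> B = {} \<Longrightarrow> X = {}"
  by blast

lemma disjoint_subset_right: "A \<inter> B = {} \<Longrightarrow> C \<subseteq> B \<Longrightarrow> A \<inter> C = {}"
  by blast

definition theta_onto ::
  "'a set set \<Rightarrow> ('a set \<Rightarrow> 'b) \<Rightarrow> 'b set \<Rightarrow> 'a \<Rightarrow> 'a \<Rightarrow> 'a list \<Rightarrow> 'a list \<Rightarrow> 'a list \<Rightarrow> bool" where
  "theta_onto E f K a b r1 r2 r3 \<longleftrightarrow>
     parallel_paths E r1 r2 \<and> parallel_paths E r1 r3 \<and> parallel_paths E r2 r3 \<and> hd r1 = a \<and> last r1 = b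
     \<and> f ` path_edges r1 \<union> f ` path_edges r2 = K \<and> f ` path_edges r1 \<union> f ` path_edges r3 = K
     \<and> f ` path_edges r2 \<union> f ` path_edges r3 = K"

lemma theta_onto_swap12: "theta_onto E f K a b r1 r2 r3 \<Longrightarrow> theta_onto E f K a b r2 r1 r3"
  unfolding theta_onto_def parallel_paths_def by (auto simp: Int_commute Un_commute)

lemma theta_onto_swap23: "theta_onto E f K a b r1 r2 r3 \<Longrightarrow> theta_onto E f K a b r1 r3 r2"
  unfolding theta_onto_def parallel_paths_def by (auto simp: Int_commute Un_commute)

lemma theta_onto_rev:
  assumes "theta_onto E f K a b r1 r2 r3"
  shows "theta_onto E f K b a (rev r1) (rev r2) (rev r3)"
proof -
  have c: "parallel_paths E r1 r2" "parallel_paths E r1 r3" "parallel_paths E r2 r3"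
    using assms unfolding theta_onto_def by auto
  then have "r1 \<noteq> []" unfolding parallel_paths_def path_def by auto
  then show ?thesis using assms parallel_paths_rev[OF c(1)] parallel_paths_rev[OF c(2)]
      parallel_paths_rev[OF c(3)]
    unfolding theta_onto_def by (simp add: hd_rev last_rev)
qed

lemma theta_onto_paths:
  assumes "theta_onto E f K a b r1 r2 r3"
  shows "path E r1" "path E r2" "path E r3"
  using assms unfolding theta_onto_def parallel_paths_def by auto

lemma theta_onto_ends:
  assumes "theta_onto E f K a b r1 r2 r3"
  shows "hd r1 = a" "hd r2 = a" "hd r3 = a" "last r1 = b" "last r2 = b" "last r3 = b" "a \<noteq> b"
  using assms unfolding theta_onto_def parallel_paths_def by auto

lemma theta_onto_meet:
  assumes "theta_onto E f K a b r1 r2 r3"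
  shows "set r1 \<inter> set r2 = {a, b}" "set r1 \<inter> set r3 = {a, b}" "set r2 \<inter> set r3 = {a, b}"
  using assms unfolding theta_onto_def parallel_paths_def by auto

lemma theta_onto_images:
  assumes "theta_onto E f K a b r1 r2 r3"
  shows "f ` path_edges r1 \<union> f ` path_edges r2 = K" "f ` path_edges r1 \<union> f ` path_edges r3 = K"
    "f ` path_edges r2 \<union> f ` path_edges r3 = K"
  using assms unfolding theta_onto_def by auto

lemma theta_onto_length: "theta_onto E f K a b r1 r2 r3 \<Longrightarrow> length r1 + length r2 \<ge> 5"
  unfolding theta_onto_def parallel_paths_def by auto

locale circuit_preserving =
  fixes V :: "'a set" and E :: "'a set set" and V' :: "'b set" and E' :: "'b set set"
    and f :: "'a set \<Rightarrow> 'b set"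
  assumes graph: "graph V E"
    and preserves: "is_circuit V E C \<Longrightarrow> is_circuit V' E' (f ` C)"
begin

lemma parallel_paths_image_circuit:
  "parallel_paths E p q \<Longrightarrow> is_circuit V' E' (f ` path_edges p \<union> f ` path_edges q)"
  using preserves[OF parallel_paths_circuit[OF graph]] by (simp add: image_Un)

lemma theta_images_eq:
  assumes c: "parallel_paths E p1 p2" "parallel_paths E p1 p3" "parallel_paths E p2 p3"
    and g: "g \<in> f ` path_edges p1" "g \<in> f ` path_edges p2"
  shows "f ` path_edges p1 \<union> f ` path_edges p2 = f ` path_edges p1 \<union> f ` path_edges p3
    \<and> f ` path_edges p1 \<union> f ` path_edges p2 = f ` path_edges p2 \<union> f ` path_edges p3"
proof (rule three_circuits_eq)
  show "is_circuit V' E' (f ` path_edges p1 \<union> f ` path_edges p2)"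
    "is_circuit V' E' (f ` path_edges p1 \<union> f ` path_edges p3)"
    "is_circuit V' E' (f ` path_edges p2 \<union> f ` path_edges p3)"
    using c by (auto intro: parallel_paths_image_circuit)
  show "g \<in> f ` path_edges p1 \<union> f ` path_edges p2" "g \<in> f ` path_edges p1 \<union> f ` path_edges p3"
    "g \<in> f ` path_edges p2 \<union> f ` path_edges p3"
    using g by blast+
qed auto

lemma theta_ontoI:
  assumes c: "parallel_paths E r1 r2" "parallel_paths E r1 r3" "parallel_paths E r2 r3"
    and ab: "hd r1 = a" "last r1 = b"
    and g: "g \<in> f ` path_edges r1 \<union> f ` path_edges r2" "g \<in> f ` path_edges r3"
  shows "theta_onto E f (f ` path_edges r1 \<union> f ` path_edges r2) a b r1 r2 r3"
proof -
  have "f ` path_edges r1 \<union> f ` path_edges r3 = f ` path_edges r1 \<union> f ` path_edges r2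
      \<and> f ` path_edges r2 \<union> f ` path_edges r3 = f ` path_edges r1 \<union> f ` path_edges r2"
  proof (cases "g \<in> f ` path_edges r1")
    case True
    then show ?thesis
      using theta_images_eq[OF c(2,1) parallel_paths_sym[OF c(3)] True g(2)] by (metis Un_commute)
  next
    case False
    then have "g \<in> f ` path_edges r2" using g(1) by blast
    then show ?thesis
      using theta_images_eq[OF c(3) parallel_paths_sym[OF c(1)] parallel_paths_sym[OF c(2)] _ g(2)]
      by (metis Un_commute)
  qed
  then show ?thesis unfolding theta_onto_def using c ab by simp
qed

text \<open>A common image edge of two branches would make all three circuits of the theta have the
  same image, contradicting that p3 escapes K.\<close>

lemma theta_images_disjoint:
  assumes c: "parallel_paths E p1 p2" "parallel_paths E p1 p3" "parallel_paths E p2 p3"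
    and K: "f ` path_edges p1 \<union> f ` path_edges p2 = K" and bad: "\<not> f ` path_edges p3 \<subseteq> K"
  shows "f ` path_edges p1 \<inter> f ` path_edges p2 = {}"
proof (rule ccontr)
  assume "f ` path_edges p1 \<inter> f ` path_edges p2 \<noteq> {}"
  then obtain g where g: "g \<in> f ` path_edges p1" "g \<in> f ` path_edges p2" by blast
  have "f ` path_edges p1 \<union> f ` path_edges p2 = f ` path_edges p1 \<union> f ` path_edges p3"
    using theta_images_eq[OF c g] by (rule conjunct1)
  then show False using bad K by (metis Un_upper2)
qed

text \<open>The segment sg of r1 between the ends of R, the detour around sg through r2, and R
  form a theta in which the first two branches cover K.\<close>

lemma ear_within_branch_disjoint:
  assumes T: "theta_onto E f K a b r1 r2 r3"
    and R: "ear E (set r1 \<union> set r2 \<union> set r3) R" and bad: "\<not> f ` path_edges R \<subseteq> K"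
    and s1: "splits_at E r1 (hd R) m1 t" and s2: "splits_at E t (last R) sg m2"
  shows "f ` path_edges sg \<inter> f ` path_edges r2 = {}"
proof -
  note paths = theta_onto_paths[OF T] and ends = theta_onto_ends[OF T]
    and meet = theta_onto_meet[OF T] and images = theta_onto_images[OF T]
  have cd: "hd R \<noteq> last R" using ear_ends[OF R] by simp
  note S = splits_at_twice[OF s1 s2 cd]
  have m1: "path E m1" "hd m1 = a" "last m1 = hd R" and sg: "path E sg" "hd sg = hd R" "last sg = last R"
    and m2: "path E m2" "hd m2 = last R" "last m2 = b"
    using S(1-9) ends(1,4) by simp_all
  have abc: "a \<in> set m1" "b \<in> set m2"
    using hd_in_set[OF path_nonempty[OF m1(1)]] last_in_set[OF path_nonempty[OF m2(1)]] m1(2) m2(3)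
    by simp_all
  have "b \<notin> set m1" "a \<notin> set m2" using S(10) abc by auto
  then have m1r2: "set m1 \<inter> set r2 \<subseteq> {a}" and r2m2: "set r2 \<inter> set m2 \<subseteq> {b}"
    using meet(1) S(13) by auto
  have "set sg \<inter> set r2 \<subseteq> {a, b}" using meet(1) S(13) by auto
  then have "set sg \<inter> set r2 \<subseteq> {hd R, last R}" using S(11,12) abc by auto
  then have sgr2: "set sg \<inter> set (m1 @ r2 @ m2) \<subseteq> {hd R, last R}" using S(11,12) by auto
  have meet3: "set (rev m1) \<inter> set r2 \<subseteq> {hd r2}" "set r2 \<inter> set (rev m2) \<subseteq> {hd (rev m2)}"
    "set (rev m1) \<inter> set (rev m2) = {}"
    using m1r2 r2m2 S(10) ends(2) m2(3) path_nonempty[OF m2(1)] by (auto simp: hd_rev)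
  have ends3: "last (rev m1) = hd r2" "last r2 = hd (rev m2)"
    using m1 m2 ends path_nonempty[OF m1(1)] path_nonempty[OF m2(1)] by (auto simp: last_rev hd_rev)
  note rh = path_join3[OF path_rev[OF m1(1)] paths(2) path_rev[OF m2(1)] ends3 meet3]
  let ?rh = "rev m1 @ tl r2 @ tl (rev m2)"
  have rh_ends: "hd ?rh = hd R" "last ?rh = last R"
    using rh(2,3) m1 m2 path_nonempty[OF m1(1)] path_nonempty[OF m2(1)] by (auto simp: hd_rev last_rev)
  have "parallel_paths E sg ?rh"
  proof (rule parallel_pathsI[OF sg(1) rh(1)])
    show "set sg \<inter> set ?rh \<subseteq> {hd sg, last sg}"
      using rh(4) sgr2 sg(2,3) by auto
    have "length m1 > 0" "length r2 > 0" "length m2 > 0"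
      using path_nonempty m1(1) m2(1) paths by blast+
    then show "length sg + length ?rh \<ge> 5"
      using rh(6) S(15) theta_onto_length[OF T] by simp
  qed (use sg rh_ends cd in auto)
  moreover have "parallel_paths E sg R" "parallel_paths E ?rh R"
  proof -
    have "path_edges sg \<subseteq> path_edges r1 \<union> path_edges r2"
      "path_edges ?rh \<subseteq> path_edges r1 \<union> path_edges r2"
      using S(14) rh(5) by auto
    then have "f ` path_edges sg \<subseteq> K" "f ` path_edges ?rh \<subseteq> K"
      unfolding images(1)[symmetric] image_Un[symmetric] by (metis image_mono)+
    then have "\<not> path_edges R \<subseteq> path_edges sg" "\<not> path_edges R \<subseteq> path_edges ?rh"
      using bad by (meson image_mono order_trans)+
    moreover have "set sg \<subseteq> set r1 \<union> set r2 \<union> set r3" "set ?rh \<subseteq> set r1 \<union> set r2 \<union> set r3"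
      using S(13) rh(4) by auto
    ultimately show "parallel_paths E sg R" "parallel_paths E ?rh R"
      using ear_parallel[OF R sg(1) sg(2,3)] ear_parallel[OF R rh(1) rh_ends] by auto
  qed
  moreover have "f ` path_edges sg \<union> f ` path_edges ?rh = K"
  proof -
    have "path_edges sg \<union> path_edges ?rh = path_edges r1 \<union> path_edges r2" using S(14) rh(5) by auto
    then show ?thesis using images(1) by (metis image_Un)
  qed
  ultimately have "f ` path_edges sg \<inter> f ` path_edges ?rh = {}"
    by (rule theta_images_disjoint[OF _ _ _ _ bad])
  moreover have "f ` path_edges r2 \<subseteq> f ` path_edges ?rh" using rh(5) by (intro image_mono) blast
  ultimately show ?thesis by (rule disjoint_subset_right)
qed

lemma no_ear_within_branch_ordered:
  assumes T: "theta_onto E f K a b r1 r2 r3"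
    and R: "ear E (set r1 \<union> set r2 \<union> set r3) R" and bad: "\<not> f ` path_edges R \<subseteq> K"
    and s1: "splits_at E r1 (hd R) m1 t" and d: "last R \<in> set t"
  shows False
proof -
  have "path E t" using s1 unfolding splits_at_def by blast
  then obtain sg m2 where s2: "splits_at E t (last R) sg m2" by (rule splits_at_exists[OF _ d])
  have R': "ear E (set r1 \<union> set r3 \<union> set r2) R" using R by (simp add: Un_ac)
  have "path_edges sg \<subseteq> path_edges r1" using s1 s2 unfolding splits_at_def by blast
  then have "f ` path_edges sg \<subseteq> f ` path_edges r1" by (rule image_mono)
  then have "f ` path_edges sg \<subseteq> f ` path_edges r2 \<union> f ` path_edges r3"
    using theta_onto_images[OF T] by (metis Un_upper1 order_trans)
  moreover have "f ` path_edges sg \<inter> f ` path_edges r2 = {}"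
    using ear_within_branch_disjoint[OF T R bad s1 s2] .
  moreover have "f ` path_edges sg \<inter> f ` path_edges r3 = {}"
    using ear_within_branch_disjoint[OF theta_onto_swap23[OF T] R' bad s1 s2] .
  ultimately have "f ` path_edges sg = {}" by (rule subset_Un_disjoint_empty)
  then have "path_edges sg = {}" by simp
  moreover have "length sg \<ge> 2"
  proof -
    have "hd sg = hd R" "last sg = last R" "path E sg" using s1 s2 unfolding splits_at_def by auto
    then show ?thesis using ear_ends[OF R] path_length_ge2 path_nonempty by metis
  qed
  ultimately show False by (simp add: path_edges_empty_iff)
qed

lemma no_ear_within_branch:
  assumes T: "theta_onto E f K a b r1 r2 r3"
    and R: "ear E (set r1 \<union> set r2 \<union> set r3) R" and bad: "\<not> f ` path_edges R \<subseteq> K"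
    and cd: "hd R \<in> set r1" "last R \<in> set r1"
  shows False
proof -
  obtain m1 t where s1: "splits_at E r1 (hd R) m1 t"
    by (rule splits_at_exists[OF theta_onto_paths(1)[OF T] cd(1)])
  show False
  proof (cases "last R \<in> set t")
    case True
    then show False using no_ear_within_branch_ordered[OF T R bad s1] by blast
  next
    case False
    then have "last R \<in> set (rev m1)" using s1 cd(2) unfolding splits_at_def by auto
    moreover have "ear E (set (rev r1) \<union> set (rev r2) \<union> set (rev r3)) R" using R by simp
    ultimately show False
      using no_ear_within_branch_ordered[OF theta_onto_rev[OF T] _ bad splits_at_rev[OF s1]] by blast
  qed
qed

text \<open>Let R run from r1 to r2. Then ga, al extended by R, and r3 extended by de reversed form a
  theta between a and last R in which the first and last branches cover K.\<close>

lemma ear_across_branches_disjoint: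
  assumes T: "theta_onto E f K a b r1 r2 r3"
    and R: "ear E (set r1 \<union> set r2 \<union> set r3) R" and bad: "\<not> f ` path_edges R \<subseteq> K"
    and s1: "splits_at E r1 (hd R) al be" and s2: "splits_at E r2 (last R) ga de"
    and c: "hd R \<notin> {a, b}" and d: "last R \<notin> {a, b}"
  shows "f ` path_edges ga \<inter> f ` path_edges r3 = {}"
proof -
  note paths = theta_onto_paths[OF T] and ends = theta_onto_ends[OF T]
    and meet = theta_onto_meet[OF T] and images = theta_onto_images[OF T]
  have al: "path E al" "hd al = a" "last al = hd R" and be: "hd be = hd R" "last be = b"
    and s1': "set al \<inter> set be = {hd R}" "set al \<union> set be = set r1"
    using s1 ends unfolding splits_at_def by auto
  have ga: "path E ga" "hd ga = a" "last ga = last R" and de: "path E de" "hd de = last R" "last de = b"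
    and s2': "set ga \<inter> set de = {last R}" "set ga \<union> set de = set r2"
      "path_edges ga \<union> path_edges de = path_edges r2"
    using s2 ends unfolding splits_at_def by auto
  have ne: "al \<noteq> []" "be \<noteq> []" "ga \<noteq> []" "de \<noteq> []" "R \<noteq> []" "r3 \<noteq> []"
    using s1 s2 ear_nonempty[OF R] paths(3) path_nonempty unfolding splits_at_def by auto
  have mem: "a \<in> set al" "b \<in> set be" "a \<in> set ga" "b \<in> set de" "a \<in> set r3" "b \<in> set r3"
    using ne al(2) be(2) ga(2) de(3) ends(3,6) hd_in_set last_in_set by metis+
  have cR: "hd R \<in> set r1" "hd R \<notin> set r2" "hd R \<notin> set r3"
    using s1' c meet by (auto simp: al(3)[symmetric] ne(1))
  have dR: "last R \<in> set r2" "last R \<notin> set r1" "last R \<notin> set r3"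
    using s2' d meet by (auto simp: ga(3)[symmetric] ne(3))
  have RW: "set R \<inter> (set r1 \<union> set r2 \<union> set r3) \<subseteq> {hd R, last R}" using ear_meets_only_at_ends[OF R] by blast
  have "b \<notin> set al" "a \<notin> set de" "b \<notin> set ga"
    using s1' s2' mem c d by (auto dest: equalityD1)
  then have sets: "set al \<inter> set r2 \<subseteq> {a}" "set al \<inter> set r3 \<subseteq> {a}" "set de \<inter> set r1 \<subseteq> {b}"
      "set de \<inter> set r3 \<subseteq> {b}" "set ga \<inter> set r1 \<subseteq> {a}" "set ga \<inter> set r3 \<subseteq> {a}"
      "set al \<subseteq> set r1" "set ga \<subseteq> set r2" "set de \<subseteq> set r2"
    using meet s1'(2) s2'(2) by auto
  have "set al \<inter> set R \<subseteq> {hd R}" using RW sets(7) dR(2) by auto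
  note P2 = path_join[OF al(1) ear_path[OF R] al(3) this]
  have "last r3 = hd (rev de)" "set r3 \<inter> set (rev de) \<subseteq> {hd (rev de)}"
    using ends(6) de(3) sets(4) ne(4) by (auto simp: hd_rev)
  note P3 = path_join[OF paths(3) path_rev[OF de(1)] this]
  have lengths: "length ga \<ge> 2" "length (al @ tl R) \<ge> 3" "length (r3 @ tl (rev de)) \<ge> 3"
  proof -
    have "length al \<ge> 2" "length ga \<ge> 2" "length de \<ge> 2" "length r3 \<ge> 2" "length R \<ge> 2"
      using path_length_ge2[OF ne(1)] path_length_ge2[OF ne(3)] path_length_ge2[OF ne(4)]
        path_length_ge2[OF ne(6)] al(2,3) ga(2,3) de(2,3) ends(3,6,7) c d ear_length[OF R]
      by auto
    then show "length ga \<ge> 2" "length (al @ tl R) \<ge> 3" "length (r3 @ tl (rev de)) \<ge> 3"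
      using P2(6) P3(6) by auto
  qed
  have ends2: "hd (al @ tl R) = a" "last (al @ tl R) = last R"
    "hd (r3 @ tl (rev de)) = a" "last (r3 @ tl (rev de)) = last R"
    using P2(2,3) P3(2,3) al(2) ends(3) de(2) ne(4) by (auto simp: last_rev)
  have ad: "a \<noteq> last R" using d by auto
  have "set ga \<inter> set (r3 @ tl (rev de)) \<subseteq> {a, last R}"
    using P3(4) sets(6) s2'(1) by auto
  then have "parallel_paths E ga (r3 @ tl (rev de))"
    using parallel_pathsI[OF ga(1) P3(1)] ga(2,3) ends2 lengths ad by simp
  moreover have "set ga \<inter> set (al @ tl R) \<subseteq> {a, last R}"
    using P2(4) sets(5,7,8) RW cR(2) by auto
  then have "parallel_paths E ga (al @ tl R)"
    using parallel_pathsI[OF ga(1) P2(1)] ga(2,3) ends2 lengths ad by simp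
  moreover have "set (r3 @ tl (rev de)) \<inter> set (al @ tl R) \<subseteq> {a, last R}"
    using P2(4) P3(4) sets(1,2,9) RW cR(2,3) dR(3) by auto
  then have "parallel_paths E (r3 @ tl (rev de)) (al @ tl R)"
    using parallel_pathsI[OF P3(1) P2(1)] ends2 lengths ad by simp
  moreover have "f ` path_edges ga \<union> f ` path_edges (r3 @ tl (rev de)) = K"
  proof -
    have "path_edges ga \<union> path_edges (r3 @ tl (rev de)) = path_edges r2 \<union> path_edges r3"
      using P3(5) s2'(3) by auto
    then show ?thesis using images(3) by (metis image_Un)
  qed
  moreover have "\<not> f ` path_edges (al @ tl R) \<subseteq> K" using bad P2(5) by auto
  ultimately have "f ` path_edges ga \<inter> f ` path_edges (r3 @ tl (rev de)) = {}"
    by (rule theta_images_disjoint)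
  moreover have "f ` path_edges r3 \<subseteq> f ` path_edges (r3 @ tl (rev de))" using P3(5) by (intro image_mono) blast
  ultimately show ?thesis by (rule disjoint_subset_right)
qed

lemma no_ear_across_branches:
  assumes T: "theta_onto E f K a b r1 r2 r3"
    and R: "ear E (set r1 \<union> set r2 \<union> set r3) R" and bad: "\<not> f ` path_edges R \<subseteq> K"
    and c: "hd R \<in> set r1" "hd R \<notin> {a, b}" and d: "last R \<in> set r2" "last R \<notin> {a, b}"
  shows False
proof -
  obtain al be where s1: "splits_at E r1 (hd R) al be"
    by (rule splits_at_exists[OF theta_onto_paths(1)[OF T] c(1)])
  obtain ga de where s2: "splits_at E r2 (last R) ga de"
    by (rule splits_at_exists[OF theta_onto_paths(2)[OF T] d(1)])
  have rR: "hd (rev R) = last R" "last (rev R) = hd R" using ear_nonempty[OF R] by (simp_all add: hd_rev last_rev)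
  have "set r1 \<union> set r2 \<union> set r3 = set r2 \<union> set r1 \<union> set r3" by blast
  then have R': "ear E (set r2 \<union> set r1 \<union> set r3) (rev R)" using R by simp
  have bad': "\<not> f ` path_edges (rev R) \<subseteq> K" using bad by simp
  have s1': "splits_at E r1 (last (rev R)) al be" and s2': "splits_at E r2 (hd (rev R)) ga de"
    using s1 s2 rR by simp_all
  have c': "hd R \<notin> {b, a}" and d': "last R \<notin> {b, a}" using c(2) d(2) by auto
  note T' = theta_onto_swap12[OF T]
  have d1: "f ` path_edges ga \<inter> f ` path_edges r3 = {}"
    using ear_across_branches_disjoint[OF T R bad s1 s2 c(2) d(2)] .
  have d2: "f ` path_edges (rev de) \<inter> f ` path_edges (rev r3) = {}"
    using ear_across_branches_disjoint[OF theta_onto_rev[OF T] _ bad splits_at_rev[OF s1]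
        splits_at_rev[OF s2] c' d'] R by simp
  have d3: "f ` path_edges al \<inter> f ` path_edges r3 = {}"
    using ear_across_branches_disjoint[OF T' R' bad' s2' s1'] rR c(2) d(2) by simp
  have d4: "f ` path_edges (rev be) \<inter> f ` path_edges (rev r3) = {}"
    using ear_across_branches_disjoint[OF theta_onto_rev[OF T'] _ bad' splits_at_rev[OF s2']
        splits_at_rev[OF s1']] R' rR c' d' by simp
  have "path_edges r1 = path_edges al \<union> path_edges be" "path_edges r2 = path_edges ga \<union> path_edges de"
    using s1 s2 unfolding splits_at_def by auto
  then have "f ` path_edges r1 \<inter> f ` path_edges r3 = {}" "f ` path_edges r2 \<inter> f ` path_edges r3 = {}"
    using d1 d2 d3 d4 by (simp_all add: image_Un Int_Un_distrib2)
  then have e: "f ` path_edges r3 \<inter> f ` path_edges r1 = {}" "f ` path_edges r3 \<inter> f ` path_edges r2 = {}"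
    by (simp_all only: Int_commute)
  have "f ` path_edges r3 \<subseteq> f ` path_edges r1 \<union> f ` path_edges r3" by (rule Un_upper2)
  then have "f ` path_edges r3 \<subseteq> f ` path_edges r1 \<union> f ` path_edges r2"
    using theta_onto_images(1,2)[OF T] by simp
  then have "f ` path_edges r3 = {}" by (rule subset_Un_disjoint_empty[OF _ e])
  then have "path_edges r3 = {}" by simp
  moreover have "length r3 \<ge> 2"
    using path_length_ge2[OF path_nonempty[OF theta_onto_paths(3)[OF T]]] theta_onto_ends[OF T] by simp
  ultimately show False by (simp add: path_edges_empty_iff)
qed

lemma theta_onto_no_escaping_ear:
  assumes T: "theta_onto E f K a b r1 r2 r3"
    and R: "ear E (set r1 \<union> set r2 \<union> set r3) R" and bad: "\<not> f ` path_edges R \<subseteq> K"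
  shows False
proof -
  let ?W = "set r1 \<union> set r2 \<union> set r3"
  have R': "ear E (set s1 \<union> set s2 \<union> set s3) R" if "set s1 \<union> set s2 \<union> set s3 = ?W" for s1 s2 s3
    using R that by simp
  have within: "hd R \<notin> set s1 \<or> last R \<notin> set s1"
    if "theta_onto E f K a b s1 s2 s3" "set s1 \<union> set s2 \<union> set s3 = ?W" for s1 s2 s3
    using no_ear_within_branch[OF that(1) R'[OF that(2)] bad] by blast
  have across: "hd R \<notin> set s1 \<or> hd R \<in> {a, b} \<or> last R \<notin> set s2 \<or> last R \<in> {a, b}"
    if "theta_onto E f K a b s1 s2 s3" "set s1 \<union> set s2 \<union> set s3 = ?W" for s1 s2 s3
    using no_ear_across_branches[OF that(1) R'[OF that(2)] bad] by blast
  note T132 = theta_onto_swap23[OF T] and T213 = theta_onto_swap12[OF T]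
  note T312 = theta_onto_swap12[OF T132] and T231 = theta_onto_swap23[OF T213]
  note T321 = theta_onto_swap12[OF T231]
  have W: "set r1 \<union> set r3 \<union> set r2 = ?W" "set r2 \<union> set r1 \<union> set r3 = ?W"
    "set r3 \<union> set r1 \<union> set r2 = ?W" "set r2 \<union> set r3 \<union> set r1 = ?W" "set r3 \<union> set r2 \<union> set r1 = ?W"
    by auto
  have "hd R \<in> ?W" "last R \<in> ?W" using ear_ends[OF R] by auto
  moreover have "a \<in> set r1" "a \<in> set r2" "a \<in> set r3" "b \<in> set r1" "b \<in> set r2" "b \<in> set r3"
    using theta_onto_meet[OF T] by auto
  ultimately show False
    using within[OF T] within[OF T213 W(2)] within[OF T321 W(5)]
      across[OF T] across[OF T132 W(1)] across[OF T213 W(2)] across[OF T231 W(4)]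
      across[OF T312 W(3)] across[OF T321 W(5)]
    by auto
qed

lemma theta_onto_of_circuit_ear:
  assumes xs: "distinct xs" "length xs \<ge> 3" "cycle_edges xs \<subseteq> E"
    and Q: "ear E (set xs) Q" "y \<in> path_edges Q" "y \<notin> cycle_edges xs"
    and x: "x \<in> cycle_edges xs" "f x = f y"
  obtains p q where "theta_onto E f (f ` cycle_edges xs) (hd Q) (last Q) p q Q" "set p \<union> set q = set xs"
proof -
  obtain p q where pq: "parallel_paths E p q" "parallel_paths E p Q" "parallel_paths E q Q"
    "hd p = hd Q" "last p = last Q" "path_edges p \<union> path_edges q = cycle_edges xs" "set p \<union> set q = set xs"
    using cycle_ear_theta[OF xs Q(1)] Q(2,3) by blast
  have "f x \<in> f ` (path_edges p \<union> path_edges q)" using x(1) pq(6) by simp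
  moreover have "f x \<in> f ` path_edges Q" using x(2) Q(2) by (metis imageI)
  ultimately have "f x \<in> f ` path_edges p \<union> f ` path_edges q" "f x \<in> f ` path_edges Q"
    by (simp_all add: image_Un)
  then have "theta_onto E f (f ` path_edges p \<union> f ` path_edges q) (hd Q) (last Q) p q Q"
    by (rule theta_ontoI[OF pq(1-5)])
  then have "theta_onto E f (f ` cycle_edges xs) (hd Q) (last Q) p q Q"
    unfolding pq(6)[symmetric] image_Un .
  then show ?thesis using that pq(7) by blast
qed

end

theorem lemma1p1:
  fixes V :: "'a set" and E :: "'a set set" and V' :: "'b set" and E' :: "'b set set"
    and f :: "'a set \<Rightarrow> 'b set"
  assumes "graph V E" and "graph V' E'"
    and "two_connected V E"
    and "\<not> is_circuit V' E' E'"
    and "circuit_surjection V E V' E' f"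
    and "e \<in> E'"
    and "is_circuit V E C"
    and "\<exists>x\<in>C. f x = e"
  shows "{x\<in>E. f x = e} \<subseteq> C"
proof
  fix y assume "y \<in> {x\<in>E. f x = e}"
  then have y: "y \<in> E" "f y = e" by auto
  show "y \<in> C"
  proof (rule ccontr)
    assume "y \<notin> C"
    have onto: "f ` E = E'" and "circuit_preserving V E V' E' f"
      using assms(1,5) unfolding circuit_surjection_def circuit_preserving_def by auto
    then interpret circuit_preserving V E V' E' f by simp
    obtain xs where xs: "distinct xs" "length xs \<ge> 3" "set xs \<subseteq> V" "cycle_edges xs \<subseteq> E"
      "C = cycle_edges xs"
      using assms(7) unfolding is_circuit_def by blast
    have "0 < length xs" "1 < length xs" using xs(2) by auto
    then have "xs ! 0 \<in> set xs" "xs ! 1 \<in> set xs" "xs ! 0 \<noteq> xs ! 1"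
      using nth_eq_iff_index_eq[OF xs(1), of 0 1] by auto
    then obtain Q where Q: "ear E (set xs) Q" "y \<in> path_edges Q"
      using ear_through_edge[OF assms(1,3) xs(3) _ _ _ y(1)] by blast
    obtain p q where T: "theta_onto E f (f ` C) (hd Q) (last Q) p q Q" "set p \<union> set q = set xs"
      using theta_onto_of_circuit_ear[OF xs(1,2,4) Q] assms(8) y(2) \<open>y \<notin> C\<close> xs(5) by metis
    have "f ` C \<noteq> E'" using assms(4) preserves[OF assms(7)] by blast
    then obtain z where z: "z \<in> E" "f z \<notin> f ` C" using onto xs(4,5) by blast
    have "set p \<union> set q \<union> set Q \<subseteq> V"
      using xs(3) T(2) path_vertices[OF assms(1) ear_path[OF Q(1)] ear_length[OF Q(1)]] by blast
    moreover have "hd Q \<in> set p \<union> set q \<union> set Q" "last Q \<in> set p \<union> set q \<union> set Q"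
      using ear_nonempty[OF Q(1)] by auto
    ultimately obtain R where "ear E (set p \<union> set q \<union> set Q) R" "z \<in> path_edges R"
      using ear_through_edge[OF assms(1,3) _ _ _ _ z(1)] ear_ends[OF Q(1)] by blast
    then show False using theta_onto_no_escaping_ear[OF T(1)] z(2) by blast
  qed
qed

end
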